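(* Let $\mathcal{H}$ be a real Hilbert space, and let $C$ and $Q$ be nonempty, closed and convex subsets of $\mathcal{H}$. Let $f:\mathcal{H}\to\mathcal{H}$ be $\alpha_1$-inverse strongly monotone and $g:\mathcal{H}\to\mathcal{H}$ be $\alpha_2$-inverse strongly monotone, for some $\alpha_1,\alpha_2>0$. Set $\alpha:=\min\{\alpha_1,\alpha_2\}$ and let $\lambda\in(0,2\alpha)$. Assume that $\Gamma:=SOL(C,f)\cap SOL(Q,g)\neq\emptyset$. Given an arbitrary $x^0\in\mathcal{H}$, define the sequences $$y^k=P_Q\big(x^k-\lambda g(x^k)\big),\qquad x^{k+1}=P_C\big(y^k-\lambda f(y^k)\big),\qquad k=0,1,2,\ldots.$$ Then $\{x^k\}_{k=0}^\infty$ converges weakly to a point $x^\ast\in\Gamma$, and moreover $x^\ast=\lim_{k\to\infty}P_\Gamma(x^k)$ (strong limit).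
   Context: An operator $h:\mathcal{H}\to\mathcal{H}$ is $\beta$-inverse strongly monotone ($\beta>0$) if $\langle h(x)-h(y),x-y\rangle\geq\beta\|h(x)-h(y)\|^2$ for all $x,y\in\mathcal{H}$. For a nonempty closed convex set $D\subset\mathcal{H}$, $P_D$ denotes the metric (nearest point) projection onto $D$. For such $D$ and an operator $h$, $SOL(D,h)$ denotes the solution set of the variational inequality: the set of $x^\ast\in D$ with $\langle h(x^\ast),x-x^\ast\rangle\geq 0$ for all $x\in D$. The set $\Gamma$ is closed and convex (so $P_\Gamma$ is well defined when $\Gamma\ne\emptyset$). *)

theory Defs
  imports "HOL-Analysis.Analysis"
begin

text \<open>Real Hilbert space: type class {real_inner, complete_space}.\<close>

definition inverse_strongly_monotone :: "real \<Rightarrow> ('a::real_inner \<Rightarrow> 'a) \<Rightarrow> bool" where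
  "inverse_strongly_monotone \<beta> h \<longleftrightarrow> \<beta> > 0 \<and>
     (\<forall>x y. inner (h x - h y) (x - y) \<ge> \<beta> * (norm (h x - h y))\<^sup>2)"

definition metric_proj :: "'a::real_inner set \<Rightarrow> 'a \<Rightarrow> 'a" where
  "metric_proj D x = (SOME p. p \<in> D \<and> (\<forall>z\<in>D. norm (x - p) \<le> norm (x - z)))"

definition SOL :: "'a::real_inner set \<Rightarrow> ('a \<Rightarrow> 'a) \<Rightarrow> 'a set" where
  "SOL D h = {xs \<in> D. \<forall>x\<in>D. inner (h xs) (x - xs) \<ge> 0}"

definition weakly_converges :: "(nat \<Rightarrow> 'a::real_inner) \<Rightarrow> 'a \<Rightarrow> bool" where
  "weakly_converges u l \<longleftrightarrow> (\<forall>z. (\<lambda>k. inner (u k) z) \<longlonglongrightarrow> inner l z)"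

end

theory Submission
  imports Defs
begin

text \<open>Each step \<open>v \<mapsto> P\<^sub>D (v - \<lambda> h v)\<close> is nonexpansive and strongly quasi-nonexpansive
  with fixed-point set \<open>SOL(D, h)\<close>. Hence so is their composition \<open>T\<close>, whose fixed points are
  exactly \<open>\<Gamma>\<close>, and the iterates \<open>x\<^sup>k\<^sup>+\<^sup>1 = T x\<^sup>k\<close> are Fejer monotone with respect
  to \<open>\<Gamma>\<close> and asymptotically regular. Fejer monotonicity makes \<open>P\<^sub>\<Gamma> x\<^sup>k\<close> converge strongly
  to some \<open>p \<in> \<Gamma>\<close>. Weak convergence to \<open>p\<close> is obtained without weak compactness: if
  \<open>\<langle>x\<^sup>k - p, z\<rangle> \<ge> \<epsilon>\<close> along a subsequence, the asymptotic centre of that subsequence, the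
  minimiser of \<open>y \<mapsto> limsup \<parallel>x\<^sup>k - y\<parallel>\<^sup>2\<close>, is a fixed point of \<open>T\<close> by asymptotic
  regularity; the convergence of the projections then forces \<open>p\<close> to be a minimiser as well,
  whereas moving from \<open>p\<close> in direction \<open>z\<close> strictly decreases that function.\<close>

section \<open>Norm identities and minimisation in Hilbert spaces\<close>

lemma power2_norm_diff_le:
  fixes x a b :: "'a::real_inner"
  shows "(norm (x - a))\<^sup>2 \<le> (norm (x - b))\<^sup>2 + 2 * norm (x - a) * norm (a - b)"
proof -
  have "(norm (x - b))\<^sup>2 = (norm (x - a))\<^sup>2 + 2 * inner (x - a) (a - b) + (norm (a - b))\<^sup>2"
    unfolding power2_norm_eq_inner
    by (simp add: inner_diff_left inner_diff_right inner_commute algebra_simps)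
  moreover have "- inner (x - a) (a - b) \<le> norm (x - a) * norm (a - b)"
    using norm_cauchy_schwarz[of "x - a" "b - a"] by (simp add: inner_diff_right norm_minus_commute)
  moreover have "0 \<le> (norm (a - b))\<^sup>2" by simp
  ultimately show ?thesis by linarith
qed

lemma power2_norm_add_le:
  fixes a b :: "'a::real_inner"
  shows "(norm (a + b))\<^sup>2 \<le> 2 * (norm a)\<^sup>2 + 2 * (norm b)\<^sup>2"
proof -
  have "2 * (norm a)\<^sup>2 + 2 * (norm b)\<^sup>2 = (norm (a + b))\<^sup>2 + (norm (a - b))\<^sup>2"
    unfolding power2_norm_eq_inner
    by (simp add: inner_diff_left inner_diff_right inner_add_left inner_add_right
        inner_commute algebra_simps)
  then show ?thesis by simp
qed

lemma power2_norm_diff_midpoint: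
  fixes x a b :: "'a::real_inner"
  shows "(norm (x - (1/2) *\<^sub>R (a + b)))\<^sup>2 =
     ((norm (x - a))\<^sup>2 + (norm (x - b))\<^sup>2) / 2 - (norm (a - b))\<^sup>2 / 4"
  by (simp add: power2_norm_eq_inner inner_diff_left inner_diff_right inner_add_left
      inner_add_right inner_commute algebra_simps) (simp add: field_simps)

lemma power2_norm_convex_combination:
  fixes a b :: "'a::real_inner"
  assumes "u + v = 1"
  shows "(norm (u *\<^sub>R a + v *\<^sub>R b))\<^sup>2 =
     u * (norm a)\<^sup>2 + v * (norm b)\<^sup>2 - u * v * (norm (a - b))\<^sup>2"
proof -
  have v: "v = 1 - u" using assms by simp
  show ?thesis unfolding v power2_norm_eq_inner
    by (simp add: inner_diff_left inner_diff_right inner_add_left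
      inner_add_right inner_commute algebra_simps)
qed

lemma Cauchy_if_power2_dist_bounded:
  fixes y :: "nat \<Rightarrow> 'a::real_normed_vector"
  assumes bound: "\<And>m n. (norm (y m - y n))\<^sup>2 \<le> a m + a n" and a: "a \<longlonglongrightarrow> 0"
  shows "Cauchy y"
proof (rule CauchyI)
  fix e :: real assume e: "0 < e"
  then have "eventually (\<lambda>n. a n < e\<^sup>2 / 2) sequentially"
    using a by (intro order_tendstoD(2)) auto
  then obtain N where N: "\<And>n. N \<le> n \<Longrightarrow> a n < e\<^sup>2 / 2"
    by (auto simp: eventually_sequentially)
  show "\<exists>N. \<forall>m\<ge>N. \<forall>n\<ge>N. norm (y m - y n) < e"
  proof (intro exI allI impI)
    fix m n assume "N \<le> m" "N \<le> n"
    then have "(norm (y m - y n))\<^sup>2 < e\<^sup>2" using bound[of m n] N[of m] N[of n] by linarith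
    then show "norm (y m - y n) < e" by (rule power2_less_imp_less) (use e in simp)
  qed
qed

text \<open>Minimising sequences are Cauchy by the midpoint inequality; the one-sided Lipschitz bound
  makes their limit a minimiser.\<close>

lemma exists_minimum_midpoint_uniformly_convex:
  fixes r :: "'a::{real_inner,complete_space} \<Rightarrow> real"
  assumes D: "D \<noteq> {}" "closed D" "convex D"
    and nonneg: "\<And>y. y \<in> D \<Longrightarrow> 0 \<le> r y"
    and midpoint: "\<And>a b. a \<in> D \<Longrightarrow> b \<in> D \<Longrightarrow>
       r ((1/2) *\<^sub>R (a + b)) \<le> (r a + r b) / 2 - (norm (a - b))\<^sup>2 / 4"
    and upper: "\<And>a. a \<in> D \<Longrightarrow> \<exists>K. \<forall>b\<in>D. r a \<le> r b + K * norm (a - b)"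
  shows "\<exists>c\<in>D. \<forall>y\<in>D. r c \<le> r y"
proof -
  define m where "m = Inf (r ` D)"
  have bdd: "bdd_below (r ` D)" using nonneg by (intro bdd_belowI[of _ 0]) auto
  have m_le: "m \<le> r y" if "y \<in> D" for y
    unfolding m_def using bdd that by (auto intro: cInf_lower)
  have "m \<in> closure (r ` D)"
    unfolding m_def using D(1) bdd by (intro closure_contains_Inf) auto
  then obtain s where s: "\<And>n. s n \<in> r ` D" and s_lim: "s \<longlonglongrightarrow> m"
    unfolding closure_sequential by blast
  then have "\<forall>n. \<exists>y. y \<in> D \<and> s n = r y" by blast
  then obtain ys where ys: "\<And>n. ys n \<in> D" and s_eq: "\<And>n. s n = r (ys n)"
    by metis
  have r_ys: "(\<lambda>n. r (ys n)) \<longlonglongrightarrow> m" using s_lim by (simp add: s_eq[symmetric])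
  have midpoint_in: "(1/2) *\<^sub>R (a + b) \<in> D" if "a \<in> D" "b \<in> D" for a b
    using convexD[OF D(3) that, of "1/2" "1/2"] by (simp add: scaleR_right_distrib)
  have "(norm (ys n - ys k))\<^sup>2 \<le> 2 * (r (ys n) - m) + 2 * (r (ys k) - m)" for n k
    using m_le[OF midpoint_in[OF ys[of n] ys[of k]]] midpoint[OF ys[of n] ys[of k]] by argo
  moreover have "(\<lambda>n. 2 * (r (ys n) - m)) \<longlonglongrightarrow> 0"
    using tendsto_mult_right_zero[OF LIM_zero[OF r_ys], of 2] by simp
  ultimately have "Cauchy ys" by (rule Cauchy_if_power2_dist_bounded)
  then obtain c where c: "ys \<longlonglongrightarrow> c" using Cauchy_convergent_iff convergent_def by blast
  have cD: "c \<in> D" using closed_sequentially[OF D(2) ys c] .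
  obtain K where K: "\<And>b. b \<in> D \<Longrightarrow> r c \<le> r b + K * norm (c - b)" using upper[OF cD] by blast
  have "(\<lambda>n. norm (c - ys n)) \<longlonglongrightarrow> 0"
    using tendsto_norm_zero[OF LIM_zero[OF c]] by (simp add: norm_minus_commute)
  then have "(\<lambda>n. r (ys n) + K * norm (c - ys n)) \<longlonglongrightarrow> m + K * 0"
    by (intro tendsto_intros r_ys)
  then have "r c \<le> m" using K[OF ys] by (intro LIMSEQ_le_const) auto
  then show ?thesis using cD m_le by (meson order_trans)
qed

section \<open>Metric projection onto closed convex sets\<close>

lemma metric_proj_nearest:
  fixes D :: "'a::{real_inner,complete_space} set"
  assumes D: "D \<noteq> {}" "closed D" "convex D"
  shows "metric_proj D x \<in> D \<and> (\<forall>z\<in>D. norm (x - metric_proj D x) \<le> norm (x - z))"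
proof -
  have "\<exists>c\<in>D. \<forall>y\<in>D. (norm (x - c))\<^sup>2 \<le> (norm (x - y))\<^sup>2"
  proof (rule exists_minimum_midpoint_uniformly_convex[OF D])
    show "(norm (x - (1/2) *\<^sub>R (a + b)))\<^sup>2 \<le>
        ((norm (x - a))\<^sup>2 + (norm (x - b))\<^sup>2) / 2 - (norm (a - b))\<^sup>2 / 4" for a b
      by (simp add: power2_norm_diff_midpoint)
    show "\<exists>K. \<forall>b\<in>D. (norm (x - a))\<^sup>2 \<le> (norm (x - b))\<^sup>2 + K * norm (a - b)" for a
      using power2_norm_diff_le[of x a] by (intro exI[of _ "2 * norm (x - a)"]) (auto simp: mult.assoc)
  qed auto
  then have "\<exists>c. c \<in> D \<and> (\<forall>y\<in>D. norm (x - c) \<le> norm (x - y))"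
    by (meson norm_ge_zero power2_le_imp_le)
  then show ?thesis unfolding metric_proj_def by (rule someI_ex)
qed

lemma metric_proj_in:
  fixes D :: "'a::{real_inner,complete_space} set"
  assumes "D \<noteq> {}" "closed D" "convex D"
  shows "metric_proj D x \<in> D"
  using metric_proj_nearest[OF assms] by blast

lemma metric_proj_le:
  fixes D :: "'a::{real_inner,complete_space} set"
  assumes "D \<noteq> {}" "closed D" "convex D" and "z \<in> D"
  shows "norm (x - metric_proj D x) \<le> norm (x - z)"
  using metric_proj_nearest[OF assms(1-3)] assms(4) by blast

lemma metric_proj_inner_le:
  fixes D :: "'a::{real_inner,complete_space} set"
  assumes D: "D \<noteq> {}" "closed D" "convex D" and z: "z \<in> D"
  shows "inner (x - metric_proj D x) (z - metric_proj D x) \<le> 0"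
proof (rule ccontr)
  define p where "p = metric_proj D x"
  define s where "s = inner (x - p) (z - p)"
  assume "\<not> inner (x - metric_proj D x) (z - metric_proj D x) \<le> 0"
  then have s: "0 < s" unfolding s_def p_def by simp
  then have "z - p \<noteq> 0" unfolding s_def by auto
  then have nz: "0 < (norm (z - p))\<^sup>2" by simp
  define t where "t = min 1 (s / (norm (z - p))\<^sup>2)"
  have t: "0 < t" "t \<le> 1" using s nz unfolding t_def by auto
  have ts: "t * (norm (z - p))\<^sup>2 \<le> s"
    using nz unfolding t_def by (metis min.cobounded2 mult.commute pos_le_divide_eq)
  have "(1 - t) *\<^sub>R p + t *\<^sub>R z \<in> D"
    using D(3) metric_proj_in[OF D] z t unfolding p_def by (intro convexD) auto
  then have "norm (x - p) \<le> norm (x - ((1 - t) *\<^sub>R p + t *\<^sub>R z))"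
    using metric_proj_le[OF D] unfolding p_def by blast
  also have "x - ((1 - t) *\<^sub>R p + t *\<^sub>R z) = (x - p) - t *\<^sub>R (z - p)"
    by (simp add: algebra_simps)
  finally have "norm (x - p) \<le> norm ((x - p) - t *\<^sub>R (z - p))" .
  then have "(norm (x - p))\<^sup>2 \<le> (norm ((x - p) - t *\<^sub>R (z - p)))\<^sup>2"
    by (simp add: power_mono)
  also have "\<dots> = (norm (x - p))\<^sup>2 - 2 * t * s + t * (t * (norm (z - p))\<^sup>2)"
    unfolding s_def power2_norm_eq_inner
    by (simp add: inner_diff_left inner_diff_right inner_commute algebra_simps)
  finally have "2 * s \<le> t * (norm (z - p))\<^sup>2" using t by (simp add: mult.assoc)
  then show False using ts s by linarith
qed

lemma metric_proj_eqI:
  fixes D :: "'a::{real_inner,complete_space} set"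
  assumes D: "D \<noteq> {}" "closed D" "convex D" and p: "p \<in> D"
    and inner_le: "\<And>z. z \<in> D \<Longrightarrow> inner (x - p) (z - p) \<le> 0"
  shows "metric_proj D x = p"
proof -
  define q where "q = metric_proj D x"
  have "inner (x - p) (q - p) \<le> 0" using inner_le metric_proj_in[OF D] unfolding q_def by blast
  moreover have "inner (x - q) (p - q) \<le> 0" using metric_proj_inner_le[OF D p] unfolding q_def .
  moreover have "inner (q - p) (q - p) = inner (x - p) (q - p) + inner (x - q) (p - q)"
    by (simp add: inner_diff_left inner_diff_right inner_commute algebra_simps)
  ultimately have "(norm (q - p))\<^sup>2 \<le> 0" by (simp add: power2_norm_eq_inner)
  then show ?thesis unfolding q_def by simp
qed

lemma metric_proj_firmly_nonexpansive:
  fixes D :: "'a::{real_inner,complete_space} set"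
  assumes D: "D \<noteq> {}" "closed D" "convex D"
  shows "(norm (metric_proj D u - metric_proj D v))\<^sup>2 \<le>
     (norm (u - v))\<^sup>2 - (norm ((u - metric_proj D u) - (v - metric_proj D v)))\<^sup>2"
proof -
  define a where "a = metric_proj D u"
  define b where "b = metric_proj D v"
  have "inner (u - a) (b - a) \<le> 0" "inner (v - b) (a - b) \<le> 0"
    unfolding a_def b_def by (intro metric_proj_inner_le[OF D] metric_proj_in[OF D])+
  moreover have "(norm (u - v))\<^sup>2 - (norm ((u - a) - (v - b)))\<^sup>2 - (norm (a - b))\<^sup>2
      = - 2 * inner (u - a) (b - a) - 2 * inner (v - b) (a - b)"
    unfolding power2_norm_eq_inner
    by (simp add: inner_diff_left inner_diff_right inner_commute algebra_simps)
  ultimately show ?thesis unfolding a_def b_def by linarith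
qed

lemma metric_proj_nonexpansive:
  fixes D :: "'a::{real_inner,complete_space} set"
  assumes "D \<noteq> {}" "closed D" "convex D"
  shows "norm (metric_proj D u - metric_proj D v) \<le> norm (u - v)"
proof -
  have "(norm (metric_proj D u - metric_proj D v))\<^sup>2 \<le> (norm (u - v))\<^sup>2"
    using metric_proj_firmly_nonexpansive[OF assms, of u v]
      zero_le_power2[of "norm ((u - metric_proj D u) - (v - metric_proj D v))"] by linarith
  then show ?thesis by (rule power2_le_imp_le) simp
qed

section \<open>Projected steps of inverse strongly monotone operators\<close>

lemma inverse_strongly_monotone_step:
  fixes h :: "'a::real_inner \<Rightarrow> 'a"
  assumes h: "inverse_strongly_monotone \<beta> h" and lam: "0 \<le> lam"
  shows "(norm ((v - lam *\<^sub>R h v) - (w - lam *\<^sub>R h w)))\<^sup>2 \<le>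
     (norm (v - w))\<^sup>2 - lam * (2 * \<beta> - lam) * (norm (h v - h w))\<^sup>2"
proof -
  have "\<beta> * (norm (h v - h w))\<^sup>2 \<le> inner (h v - h w) (v - w)"
    using h unfolding inverse_strongly_monotone_def by blast
  then have "2 * lam * (\<beta> * (norm (h v - h w))\<^sup>2) \<le> 2 * lam * inner (h v - h w) (v - w)"
    using lam by (intro mult_left_mono) auto
  moreover have "(norm ((v - lam *\<^sub>R h v) - (w - lam *\<^sub>R h w)))\<^sup>2 =
      (norm (v - w))\<^sup>2 - 2 * lam * inner (h v - h w) (v - w) + lam * lam * (norm (h v - h w))\<^sup>2"
    unfolding power2_norm_eq_inner
    by (simp add: inner_diff_left inner_diff_right inner_commute algebra_simps)
  ultimately show ?thesis by (simp add: algebra_simps)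
qed

lemma projected_step_nonexpansive:
  fixes D :: "'a::{real_inner,complete_space} set"
  assumes D: "D \<noteq> {}" "closed D" "convex D"
    and h: "inverse_strongly_monotone \<beta> h" and lam: "0 \<le> lam" "lam \<le> 2 * \<beta>"
  shows "norm (metric_proj D (v - lam *\<^sub>R h v) - metric_proj D (w - lam *\<^sub>R h w)) \<le> norm (v - w)"
proof -
  have "0 \<le> lam * (2 * \<beta> - lam) * (norm (h v - h w))\<^sup>2" using lam by simp
  then have "(norm ((v - lam *\<^sub>R h v) - (w - lam *\<^sub>R h w)))\<^sup>2 \<le> (norm (v - w))\<^sup>2"
    using inverse_strongly_monotone_step[OF h lam(1), of v w] by linarith
  then have "norm ((v - lam *\<^sub>R h v) - (w - lam *\<^sub>R h w)) \<le> norm (v - w)"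
    by (rule power2_le_imp_le) simp
  then show ?thesis using metric_proj_nonexpansive[OF D] order_trans by blast
qed

lemma projected_step_fixed_iff_SOL:
  fixes D :: "'a::{real_inner,complete_space} set"
  assumes D: "D \<noteq> {}" "closed D" "convex D" and lam: "0 < lam"
  shows "metric_proj D (v - lam *\<^sub>R h v) = v \<longleftrightarrow> v \<in> SOL D h"
proof
  assume fixed: "metric_proj D (v - lam *\<^sub>R h v) = v"
  have "0 \<le> inner (h v) (z - v)" if "z \<in> D" for z
  proof -
    have "- lam * inner (h v) (z - v) \<le> 0"
      using metric_proj_inner_le[OF D that, of "v - lam *\<^sub>R h v"] fixed by (simp add: inner_diff_left)
    then show ?thesis using lam by (simp add: mult_le_0_iff zero_le_mult_iff)
  qed
  moreover have "v \<in> D" using metric_proj_in[OF D, of "v - lam *\<^sub>R h v"] fixed by simp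
  ultimately show "v \<in> SOL D h" unfolding SOL_def by blast
next
  assume "v \<in> SOL D h"
  then have "v \<in> D" and sol: "\<And>z. z \<in> D \<Longrightarrow> 0 \<le> inner (h v) (z - v)"
    unfolding SOL_def by auto
  show "metric_proj D (v - lam *\<^sub>R h v) = v"
  proof (rule metric_proj_eqI[OF D \<open>v \<in> D\<close>])
    fix z assume "z \<in> D"
    then have "0 \<le> lam * inner (h v) (z - v)" using sol lam by simp
    then show "inner ((v - lam *\<^sub>R h v) - v) (z - v) \<le> 0" by (simp add: inner_diff_left)
  qed
qed

section \<open>Strongly quasi-nonexpansive and nonexpansive maps\<close>

definition strongly_quasi_nonexpansive ::
    "real \<Rightarrow> ('a::real_inner \<Rightarrow> 'a) \<Rightarrow> 'a set \<Rightarrow> bool" where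
  "strongly_quasi_nonexpansive \<kappa> S F \<longleftrightarrow> 0 < \<kappa> \<and>
     (\<forall>v. \<forall>q\<in>F. (norm (S v - q))\<^sup>2 \<le> (norm (v - q))\<^sup>2 - \<kappa> * (norm (v - S v))\<^sup>2)"

lemma projected_step_strongly_quasi_nonexpansive:
  fixes D :: "'a::{real_inner,complete_space} set"
  assumes D: "D \<noteq> {}" "closed D" "convex D"
    and h: "inverse_strongly_monotone \<beta> h" and lam: "0 < lam" "lam < 2 * \<beta>"
  shows "\<exists>\<kappa>. strongly_quasi_nonexpansive \<kappa> (\<lambda>v. metric_proj D (v - lam *\<^sub>R h v)) (SOL D h)"
proof -
  define S where "S v = metric_proj D (v - lam *\<^sub>R h v)" for v
  define c where "c = lam * (2 * \<beta> - lam)"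
  define \<kappa> where "\<kappa> = min 1 (c / lam\<^sup>2) / 2"
  have c: "0 < c" and \<kappa>: "0 < \<kappa>" using lam unfolding c_def \<kappa>_def by auto
  have "(norm (S v - q))\<^sup>2 \<le> (norm (v - q))\<^sup>2 - \<kappa> * (norm (v - S v))\<^sup>2"
    if q: "q \<in> SOL D h" for v q
  proof -
    define R where "R = (v - lam *\<^sub>R h v - S v) + lam *\<^sub>R h q"
    have Sq: "S q = q" unfolding S_def using projected_step_fixed_iff_SOL[OF D lam(1)] q by blast
    have "(norm (S v - S q))\<^sup>2 \<le> (norm ((v - lam *\<^sub>R h v) - (q - lam *\<^sub>R h q)))\<^sup>2
        - (norm ((v - lam *\<^sub>R h v - S v) - (q - lam *\<^sub>R h q - S q)))\<^sup>2"
      unfolding S_def by (rule metric_proj_firmly_nonexpansive[OF D])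
    also have "(v - lam *\<^sub>R h v - S v) - (q - lam *\<^sub>R h q - S q) = R"
      unfolding R_def Sq by simp
    finally have "(norm (S v - q))\<^sup>2 \<le>
        (norm ((v - lam *\<^sub>R h v) - (q - lam *\<^sub>R h q)))\<^sup>2 - (norm R)\<^sup>2"
      unfolding Sq .
    then have firm: "(norm (S v - q))\<^sup>2 \<le> (norm (v - q))\<^sup>2 - c * (norm (h v - h q))\<^sup>2 - (norm R)\<^sup>2"
      using inverse_strongly_monotone_step[OF h, of lam v q] lam Sq unfolding c_def by simp
    have "v - S v = R + lam *\<^sub>R (h v - h q)" unfolding R_def by (simp add: algebra_simps)
    then have "(norm (v - S v))\<^sup>2 \<le> 2 * (norm R)\<^sup>2 + 2 * (lam * norm (h v - h q))\<^sup>2"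
      using power2_norm_add_le[of R "lam *\<^sub>R (h v - h q)"] lam by simp
    then have "\<kappa> * (norm (v - S v))\<^sup>2 \<le> \<kappa> * (2 * (norm R)\<^sup>2 + 2 * (lam * norm (h v - h q))\<^sup>2)"
      using \<kappa> by (intro mult_left_mono) auto
    also have "\<dots> = 2 * \<kappa> * (norm R)\<^sup>2 + 2 * \<kappa> * lam\<^sup>2 * (norm (h v - h q))\<^sup>2"
      by (simp add: power_mult_distrib algebra_simps)
    also have "\<dots> \<le> (norm R)\<^sup>2 + c * (norm (h v - h q))\<^sup>2"
    proof (rule add_mono)
      have "2 * \<kappa> \<le> 1" unfolding \<kappa>_def by simp
      from mult_right_mono[OF this zero_le_power2[of "norm R"]]
      show "2 * \<kappa> * (norm R)\<^sup>2 \<le> (norm R)\<^sup>2" by simp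
      have "2 * \<kappa> * lam\<^sup>2 \<le> c" using lam unfolding \<kappa>_def by (simp add: min_def field_simps)
      then show "2 * \<kappa> * lam\<^sup>2 * (norm (h v - h q))\<^sup>2 \<le> c * (norm (h v - h q))\<^sup>2"
        by (simp add: mult_right_mono)
    qed
    finally show ?thesis using firm by linarith
  qed
  then show ?thesis unfolding strongly_quasi_nonexpansive_def S_def using \<kappa> by blast
qed

lemma strongly_quasi_nonexpansive_comp:
  assumes A: "strongly_quasi_nonexpansive \<kappa>\<^sub>A A F\<^sub>A" and B: "strongly_quasi_nonexpansive \<kappa>\<^sub>B B F\<^sub>B"
  shows "strongly_quasi_nonexpansive (min \<kappa>\<^sub>A \<kappa>\<^sub>B / 2) (A \<circ> B) (F\<^sub>A \<inter> F\<^sub>B)"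
  unfolding strongly_quasi_nonexpansive_def
proof (intro conjI allI ballI)
  show "0 < min \<kappa>\<^sub>A \<kappa>\<^sub>B / 2" using A B unfolding strongly_quasi_nonexpansive_def by simp
  fix v q assume q: "q \<in> F\<^sub>A \<inter> F\<^sub>B"
  define \<kappa> where "\<kappa> = min \<kappa>\<^sub>A \<kappa>\<^sub>B"
  have "(norm (A (B v) - q))\<^sup>2 \<le> (norm (B v - q))\<^sup>2 - \<kappa>\<^sub>A * (norm (B v - A (B v)))\<^sup>2"
    "(norm (B v - q))\<^sup>2 \<le> (norm (v - q))\<^sup>2 - \<kappa>\<^sub>B * (norm (v - B v))\<^sup>2"
    using A B q unfolding strongly_quasi_nonexpansive_def by auto
  moreover have "\<kappa> * (norm (B v - A (B v)))\<^sup>2 \<le> \<kappa>\<^sub>A * (norm (B v - A (B v)))\<^sup>2"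
    "\<kappa> * (norm (v - B v))\<^sup>2 \<le> \<kappa>\<^sub>B * (norm (v - B v))\<^sup>2"
    unfolding \<kappa>_def by (simp_all add: mult_right_mono)
  moreover have "\<kappa> / 2 * (norm (v - A (B v)))\<^sup>2 \<le>
      \<kappa> * (norm (v - B v))\<^sup>2 + \<kappa> * (norm (B v - A (B v)))\<^sup>2"
  proof -
    have "0 \<le> \<kappa>" using A B unfolding strongly_quasi_nonexpansive_def \<kappa>_def by simp
    then have "\<kappa> / 2 * (norm ((v - B v) + (B v - A (B v))))\<^sup>2 \<le>
        \<kappa> / 2 * (2 * (norm (v - B v))\<^sup>2 + 2 * (norm (B v - A (B v)))\<^sup>2)"
      by (intro mult_left_mono power2_norm_add_le) simp
    then show ?thesis by (simp add: algebra_simps)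
  qed
  ultimately show "(norm ((A \<circ> B) v - q))\<^sup>2 \<le> (norm (v - q))\<^sup>2 - \<kappa> / 2 * (norm (v - (A \<circ> B) v))\<^sup>2"
    by simp
qed

lemma strongly_quasi_nonexpansive_comp_fixed_points:
  assumes A: "strongly_quasi_nonexpansive \<kappa>\<^sub>A A F\<^sub>A" and B: "strongly_quasi_nonexpansive \<kappa>\<^sub>B B F\<^sub>B"
    and fixed_A: "\<And>v. A v = v \<longleftrightarrow> v \<in> F\<^sub>A" and fixed_B: "\<And>v. B v = v \<longleftrightarrow> v \<in> F\<^sub>B"
    and common: "F\<^sub>A \<inter> F\<^sub>B \<noteq> {}"
  shows "{v. A (B v) = v} = F\<^sub>A \<inter> F\<^sub>B"
proof -
  obtain q where q: "q \<in> F\<^sub>A \<inter> F\<^sub>B" using common by blast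
  have "B v = v" if fixed: "A (B v) = v" for v
  proof -
    have "(norm (A (B v) - q))\<^sup>2 \<le> (norm (B v - q))\<^sup>2 - \<kappa>\<^sub>A * (norm (B v - A (B v)))\<^sup>2"
      "(norm (B v - q))\<^sup>2 \<le> (norm (v - q))\<^sup>2 - \<kappa>\<^sub>B * (norm (v - B v))\<^sup>2"
      "0 \<le> \<kappa>\<^sub>A * (norm (B v - A (B v)))\<^sup>2"
      using A B q unfolding strongly_quasi_nonexpansive_def by auto
    then have "\<kappa>\<^sub>B * (norm (v - B v))\<^sup>2 \<le> 0" unfolding fixed by linarith
    then show ?thesis using B unfolding strongly_quasi_nonexpansive_def
      by (simp add: mult_le_0_iff)
  qed
  then have "A (B v) = v \<longleftrightarrow> A v = v \<and> B v = v" for v by force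
  then show ?thesis using fixed_A fixed_B by blast
qed

lemma strongly_quasi_nonexpansive_asymptotically_regular:
  assumes T: "strongly_quasi_nonexpansive \<kappa> T F" and q: "q \<in> F"
    and x: "\<And>k. x (Suc k) = T (x k)"
  shows "(\<lambda>k. norm (x k - T (x k))) \<longlonglongrightarrow> 0"
proof -
  define d where "d k = \<kappa> * (norm (x k - T (x k)))\<^sup>2" for k
  have \<kappa>: "0 < \<kappa>" using T unfolding strongly_quasi_nonexpansive_def by simp
  have step: "(norm (x (Suc k) - q))\<^sup>2 \<le> (norm (x k - q))\<^sup>2 - d k" for k
    using T q unfolding strongly_quasi_nonexpansive_def d_def x by blast
  have bound: "(norm (x n - q))\<^sup>2 + (\<Sum>k<n. d k) \<le> (norm (x 0 - q))\<^sup>2" for n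
  proof (induction n)
    case (Suc n)
    then show ?case using step[of n] by simp
  qed simp
  have "summable d"
  proof (rule summableI_nonneg_bounded)
    show "0 \<le> d k" for k unfolding d_def using \<kappa> by simp
    show "(\<Sum>k<n. d k) \<le> (norm (x 0 - q))\<^sup>2" for n
      using bound[of n] zero_le_power2[of "norm (x n - q)"] by linarith
  qed
  then have "(\<lambda>k. d k / \<kappa>) \<longlonglongrightarrow> 0 / \<kappa>" by (intro tendsto_divide summable_LIMSEQ_zero) (use \<kappa> in auto)
  then have "(\<lambda>k. sqrt ((norm (x k - T (x k)))\<^sup>2)) \<longlonglongrightarrow> sqrt 0"
    using \<kappa> unfolding d_def by (intro tendsto_real_sqrt) simp
  then show ?thesis by simp
qed

lemma closed_fixed_points_nonexpansive:
  fixes T :: "'a::real_normed_vector \<Rightarrow> 'a"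
  assumes "\<And>a b. norm (T a - T b) \<le> norm (a - b)"
  shows "closed {x. T x = x}"
proof -
  have "continuous_on UNIV T"
    unfolding continuous_on_iff dist_norm using assms by (meson le_less_trans)
  then show ?thesis using closed_Collect_eq[of T "\<lambda>x. x"] by (simp add: continuous_on_id)
qed

lemma convex_fixed_points_nonexpansive:
  fixes T :: "'a::real_inner \<Rightarrow> 'a"
  assumes nonexp: "\<And>a b. norm (T a - T b) \<le> norm (a - b)"
  shows "convex {x. T x = x}"
proof (rule convexI)
  fix a b :: 'a and u v :: real
  assume "a \<in> {x. T x = x}" "b \<in> {x. T x = x}" and uv: "0 \<le> u" "0 \<le> v" "u + v = 1"
  then have Ta: "T a = a" and Tb: "T b = b" by auto
  define w where "w = u *\<^sub>R a + v *\<^sub>R b"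
  have u: "u = 1 - v" using uv by simp
  have "w - a = v *\<^sub>R (b - a)" "w - b = u *\<^sub>R (a - b)" unfolding w_def u by (simp_all add: algebra_simps)
  then have Na: "norm (T w - a) \<le> v * norm (a - b)" and Nb: "norm (T w - b) \<le> u * norm (a - b)"
    using nonexp[of w a] nonexp[of w b] uv unfolding Ta Tb by (simp_all add: norm_minus_commute)
  from Na have Xa: "(norm (T w - a))\<^sup>2 \<le> (v * norm (a - b))\<^sup>2" by (intro power_mono) auto
  from Nb have Xb: "(norm (T w - b))\<^sup>2 \<le> (u * norm (a - b))\<^sup>2" by (intro power_mono) auto
  have "T w - w = u *\<^sub>R (T w - a) + v *\<^sub>R (T w - b)" unfolding w_def u by (simp add: algebra_simps)
  then have "(norm (T w - w))\<^sup>2 = u * (norm (T w - a))\<^sup>2 + v * (norm (T w - b))\<^sup>2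
       - u * v * (norm (a - b))\<^sup>2"
    using power2_norm_convex_combination[OF uv(3), of "T w - a" "T w - b"]
    by (simp add: norm_minus_commute)
  also have "\<dots> \<le> u * (v * norm (a - b))\<^sup>2 + v * (u * norm (a - b))\<^sup>2 - u * v * (norm (a - b))\<^sup>2"
    using Xa Xb uv by (intro diff_right_mono add_mono mult_left_mono) auto
  also have "\<dots> = u * v * (u + v - 1) * (norm (a - b))\<^sup>2"
    by (simp add: power2_eq_square algebra_simps)
  finally have "(norm (T w - w))\<^sup>2 \<le> 0" using uv by simp
  then show "u *\<^sub>R a + v *\<^sub>R b \<in> {x. T x = x}" unfolding w_def by simp
qed

section \<open>Asymptotic centres\<close>

text \<open>The limit superior of a real sequence, meaningful for bounded sequences; HOL's \<open>limsup\<close>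
  would require passing through the extended reals.\<close>

definition upper_limit :: "(nat \<Rightarrow> real) \<Rightarrow> real" where
  "upper_limit a = Inf {v. eventually (\<lambda>j. a j \<le> v) sequentially}"

lemma eventual_bounds_bdd_below:
  fixes a :: "nat \<Rightarrow> real"
  assumes "\<And>j. 0 \<le> a j"
  shows "bdd_below {v. eventually (\<lambda>j. a j \<le> v) sequentially}"
proof (rule bdd_belowI[of _ 0])
  fix v assume "v \<in> {v. eventually (\<lambda>j. a j \<le> v) sequentially}"
  then obtain N where "\<forall>n\<ge>N. a n \<le> v" by (auto simp: eventually_sequentially)
  then have "a N \<le> v" by simp
  then show "0 \<le> v" using assms[of N] by linarith
qed

lemma eventual_bounds_nonempty:
  fixes a :: "nat \<Rightarrow> real"
  assumes "\<And>j. a j \<le> B"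
  shows "{v. eventually (\<lambda>j. a j \<le> v) sequentially} \<noteq> {}"
  using assms by (auto intro!: exI[of _ B])

lemma upper_limit_le:
  fixes a :: "nat \<Rightarrow> real"
  assumes "\<And>j. 0 \<le> a j" and "eventually (\<lambda>j. a j \<le> v) sequentially"
  shows "upper_limit a \<le> v"
  unfolding upper_limit_def using assms by (intro cInf_lower eventual_bounds_bdd_below) auto

lemma upper_limit_nonneg:
  fixes a :: "nat \<Rightarrow> real"
  assumes "\<And>j. 0 \<le> a j" and "\<And>j. a j \<le> B"
  shows "0 \<le> upper_limit a"
  unfolding upper_limit_def
proof (rule cInf_greatest)
  show "{v. eventually (\<lambda>j. a j \<le> v) sequentially} \<noteq> {}"
    using eventual_bounds_nonempty[OF assms(2)] .
  show "0 \<le> v" if "v \<in> {v. eventually (\<lambda>j. a j \<le> v) sequentially}" for v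
    using eventual_bounds_bdd_below[OF assms(1)] that assms(1)
    by (metis eventually_sequentially mem_Collect_eq order.refl order_trans)
qed

lemma eventually_less_upper_limit:
  fixes a :: "nat \<Rightarrow> real"
  assumes "\<And>j. 0 \<le> a j" and "\<And>j. a j \<le> B" and "0 < \<epsilon>"
  shows "eventually (\<lambda>j. a j < upper_limit a + \<epsilon>) sequentially"
proof -
  have "Inf {v. eventually (\<lambda>j. a j \<le> v) sequentially} < upper_limit a + \<epsilon>"
    unfolding upper_limit_def using assms(3) by simp
  then obtain v where "eventually (\<lambda>j. a j \<le> v) sequentially" "v < upper_limit a + \<epsilon>"
    using cInf_less_iff[OF eventual_bounds_nonempty[OF assms(2)] eventual_bounds_bdd_below[OF assms(1)]]
    by auto
  then show ?thesis by (auto elim: eventually_mono)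
qed

lemma upper_limit_le_combination:
  fixes a b c e :: "nat \<Rightarrow> real"
  assumes a: "\<And>j. 0 \<le> a j" and b: "\<And>j. 0 \<le> b j" "\<And>j. b j \<le> B"
    and c: "\<And>j. 0 \<le> c j" "\<And>j. c j \<le> B'" and e: "e \<longlonglongrightarrow> 0"
    and st: "0 \<le> s" "0 \<le> t" and le: "\<And>j. a j \<le> s * b j + t * c j + d + e j"
  shows "upper_limit a \<le> s * upper_limit b + t * upper_limit c + d"
proof (rule field_le_epsilon)
  fix \<epsilon> :: real assume "0 < \<epsilon>"
  define \<delta> where "\<delta> = \<epsilon> / (s + t + 1)"
  have \<delta>: "0 < \<delta>" "(s + t + 1) * \<delta> = \<epsilon>" using \<open>0 < \<epsilon>\<close> st unfolding \<delta>_def by auto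
  have "eventually (\<lambda>j. b j < upper_limit b + \<delta> \<and> c j < upper_limit c + \<delta> \<and> e j < \<delta>)
      sequentially"
    using eventually_less_upper_limit[OF b \<delta>(1)] eventually_less_upper_limit[OF c \<delta>(1)]
      order_tendstoD(2)[OF e \<delta>(1)] by (simp add: eventually_conj_iff)
  then have "eventually (\<lambda>j. a j \<le> s * upper_limit b + t * upper_limit c + d + (s + t + 1) * \<delta>)
      sequentially"
  proof (rule eventually_mono)
    fix j assume j: "b j < upper_limit b + \<delta> \<and> c j < upper_limit c + \<delta> \<and> e j < \<delta>"
    have "s * b j \<le> s * (upper_limit b + \<delta>)" "t * c j \<le> t * (upper_limit c + \<delta>)"
      using j st by (intro mult_left_mono; simp)+
    then show "a j \<le> s * upper_limit b + t * upper_limit c + d + (s + t + 1) * \<delta>"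
      using le[of j] j by (simp add: algebra_simps)
  qed
  then show "upper_limit a \<le> s * upper_limit b + t * upper_limit c + d + \<epsilon>"
    unfolding \<delta>(2) by (rule upper_limit_le[OF a])
qed

definition asymptotic_radius_sq :: "(nat \<Rightarrow> 'a::real_normed_vector) \<Rightarrow> 'a \<Rightarrow> real" where
  "asymptotic_radius_sq u y = upper_limit (\<lambda>j. (norm (u j - y))\<^sup>2)"

lemma power2_norm_diff_le_bound:
  fixes u y :: "'a::real_normed_vector"
  assumes "norm u \<le> M"
  shows "(norm (u - y))\<^sup>2 \<le> (M + norm y)\<^sup>2"
  using assms norm_triangle_ineq4[of u y] by (intro power_mono) auto

lemma asymptotic_radius_sq_le:
  fixes u :: "nat \<Rightarrow> 'a::real_normed_vector"
  assumes bounded: "\<And>j. norm (u j) \<le> M" and e: "e \<longlonglongrightarrow> 0" and st: "0 \<le> s" "0 \<le> t"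
    and le: "\<And>j. (norm (u j - y))\<^sup>2 \<le> s * (norm (u j - a))\<^sup>2 + t * (norm (u j - b))\<^sup>2 + d + e j"
  shows "asymptotic_radius_sq u y \<le> s * asymptotic_radius_sq u a + t * asymptotic_radius_sq u b + d"
  unfolding asymptotic_radius_sq_def
  by (rule upper_limit_le_combination[OF _ _ power2_norm_diff_le_bound _ power2_norm_diff_le_bound e st le])
    (use bounded in auto)

lemma asymptotic_radius_sq_nonneg:
  fixes u :: "nat \<Rightarrow> 'a::real_normed_vector"
  assumes "\<And>j. norm (u j) \<le> M"
  shows "0 \<le> asymptotic_radius_sq u y"
  unfolding asymptotic_radius_sq_def
  by (rule upper_limit_nonneg[OF _ power2_norm_diff_le_bound[OF assms]]) simp

lemma asymptotic_radius_sq_has_minimum: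
  fixes u :: "nat \<Rightarrow> 'a::{real_inner,complete_space}"
  assumes bounded: "\<And>j. norm (u j) \<le> M"
  shows "\<exists>c. \<forall>y. asymptotic_radius_sq u c \<le> asymptotic_radius_sq u y"
proof -
  let ?r = "asymptotic_radius_sq u"
  have "\<exists>c\<in>UNIV. \<forall>y\<in>UNIV. ?r c \<le> ?r y"
  proof (rule exists_minimum_midpoint_uniformly_convex)
    show "?r ((1/2) *\<^sub>R (a + b)) \<le> (?r a + ?r b) / 2 - (norm (a - b))\<^sup>2 / 4" for a b
      using asymptotic_radius_sq_le[where u = u and M = M, OF bounded tendsto_const, where s = "1/2" and t = "1/2"
          and y = "(1/2) *\<^sub>R (a + b)" and a = a and b = b and d = "- (norm (a - b))\<^sup>2 / 4"]
      by (simp add: power2_norm_diff_midpoint add_divide_distrib)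
    show "\<exists>K. \<forall>b\<in>UNIV. ?r a \<le> ?r b + K * norm (a - b)" for a
    proof (intro exI ballI)
      fix b
      have "(norm (u j - a))\<^sup>2 \<le> (norm (u j - b))\<^sup>2 + 2 * (M + norm a) * norm (a - b)" for j
      proof -
        have "norm (u j - a) \<le> M + norm a" using norm_triangle_ineq4[of "u j" a] bounded[of j] by simp
        then have "2 * norm (u j - a) * norm (a - b) \<le> 2 * (M + norm a) * norm (a - b)"
          by (intro mult_right_mono) auto
        then show ?thesis using power2_norm_diff_le[of "u j" a b] by linarith
      qed
      then show "?r a \<le> ?r b + 2 * (M + norm a) * norm (a - b)"
        using asymptotic_radius_sq_le[where u = u and M = M, OF bounded tendsto_const, where s = 1 and t = 0 and y = a and a = b
            and d = "2 * (M + norm a) * norm (a - b)"] by simp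
    qed
  qed (use asymptotic_radius_sq_nonneg[OF bounded] in auto)
  then show ?thesis by blast
qed

text \<open>A substitute for the demiclosedness principle, which would need weak compactness.\<close>

lemma asymptotic_center_fixed_point:
  fixes u :: "nat \<Rightarrow> 'a::{real_inner,complete_space}" and T :: "'a \<Rightarrow> 'a"
  assumes bounded: "\<And>j. norm (u j) \<le> M"
    and nonexp: "\<And>a b. norm (T a - T b) \<le> norm (a - b)"
    and regular: "(\<lambda>j. norm (u j - T (u j))) \<longlonglongrightarrow> 0"
    and center: "\<And>y. asymptotic_radius_sq u c \<le> asymptotic_radius_sq u y"
  shows "T c = c"
proof -
  let ?r = "asymptotic_radius_sq u"
  define e where "e j = norm (u j - T (u j)) * (2 * (M + norm c) + norm (u j - T (u j)))" for j
  have "e \<longlonglongrightarrow> 0 * (2 * (M + norm c) + 0)"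
    unfolding e_def by (intro tendsto_intros regular)
  moreover have "(norm (u j - T c))\<^sup>2 \<le> (norm (u j - c))\<^sup>2 + e j" for j
  proof -
    have "norm (u j - T c) \<le> norm (u j - T (u j)) + norm (T (u j) - T c)"
      using norm_triangle_ineq[of "u j - T (u j)" "T (u j) - T c"] by simp
    also have "\<dots> \<le> norm (u j - c) + norm (u j - T (u j))" using nonexp[of "u j" c] by simp
    finally have "(norm (u j - T c))\<^sup>2 \<le> (norm (u j - c) + norm (u j - T (u j)))\<^sup>2"
      by (intro power_mono) auto
    also have "\<dots> \<le> (norm (u j - c))\<^sup>2 + e j"
    proof -
      have "norm (u j - c) \<le> M + norm c" using norm_triangle_ineq4[of "u j" c] bounded[of j] by simp
      then have "2 * norm (u j - c) * norm (u j - T (u j)) \<le> 2 * (M + norm c) * norm (u j - T (u j))"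
        by (intro mult_right_mono) auto
      moreover have "e j = 2 * (M + norm c) * norm (u j - T (u j)) + (norm (u j - T (u j)))\<^sup>2"
        unfolding e_def by (simp add: algebra_simps power2_eq_square)
      ultimately show ?thesis unfolding power2_sum by linarith
    qed
    finally show ?thesis .
  qed
  ultimately have "?r (T c) \<le> ?r c"
    using asymptotic_radius_sq_le[where u = u and M = M, OF bounded, where e = e and s = 1 and t = 0 and y = "T c" and a = c
        and d = 0] by simp
  moreover have "?r ((1/2) *\<^sub>R (c + T c)) \<le> ?r c / 2 + ?r (T c) / 2 - (norm (c - T c))\<^sup>2 / 4"
    using asymptotic_radius_sq_le[where u = u and M = M, OF bounded tendsto_const, where s = "1/2"
        and t = "1/2" and y = "(1/2) *\<^sub>R (c + T c)" and a = c and b = "T c"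
        and d = "- (norm (c - T c))\<^sup>2 / 4"]
    by (simp add: power2_norm_diff_midpoint)
  ultimately have "(norm (c - T c))\<^sup>2 \<le> 0" using center[of "(1/2) *\<^sub>R (c + T c)"] by linarith
  then show ?thesis by simp
qed

lemma asymptotic_radius_sq_add_le:
  fixes u :: "nat \<Rightarrow> 'a::real_inner"
  assumes bounded: "\<And>j. norm (u j) \<le> M"
    and e: "e \<longlonglongrightarrow> 0" and inner_le: "\<And>j. inner (u j - p) (c - p) \<le> e j"
  shows "asymptotic_radius_sq u p + (norm (p - c))\<^sup>2 \<le> asymptotic_radius_sq u c"
proof -
  have "(norm (u j - p))\<^sup>2 \<le> (norm (u j - c))\<^sup>2 - (norm (p - c))\<^sup>2 + 2 * e j" for j
  proof -
    have "(norm (u j - c))\<^sup>2 = (norm (u j - p))\<^sup>2 - 2 * inner (u j - p) (c - p) + (norm (p - c))\<^sup>2"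
      unfolding power2_norm_eq_inner
      by (simp add: inner_diff_left inner_diff_right inner_commute algebra_simps)
    then show ?thesis using inner_le[of j] by simp
  qed
  moreover have "(\<lambda>j. 2 * e j) \<longlonglongrightarrow> 0" using tendsto_mult_right_zero[OF e] by simp
  ultimately show ?thesis
    using asymptotic_radius_sq_le[where u = u and M = M, OF bounded, where e = "\<lambda>j. 2 * e j" and s = 1 and t = 0 and y = p
        and a = c and d = "- (norm (p - c))\<^sup>2"]
    by simp
qed

lemma asymptotic_radius_sq_descent:
  fixes u :: "nat \<Rightarrow> 'a::real_inner"
  assumes bounded: "\<And>j. norm (u j) \<le> M"
    and \<epsilon>: "0 < \<epsilon>" "\<And>j. \<epsilon> \<le> inner (u j - p) z"
  shows "asymptotic_radius_sq u (p + (\<epsilon> / (norm z)\<^sup>2) *\<^sub>R z) < asymptotic_radius_sq u p"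
proof -
  define t where "t = \<epsilon> / (norm z)\<^sup>2"
  have "z \<noteq> 0" using \<epsilon> by auto
  then have t: "0 < t" "t * (norm z)\<^sup>2 = \<epsilon>" using \<epsilon> unfolding t_def by auto
  have "(norm (u j - (p + t *\<^sub>R z)))\<^sup>2 \<le> (norm (u j - p))\<^sup>2 - t * \<epsilon>" for j
  proof -
    have "(norm (u j - (p + t *\<^sub>R z)))\<^sup>2
        = (norm (u j - p))\<^sup>2 - 2 * t * inner (u j - p) z + t * (t * (norm z)\<^sup>2)"
      unfolding power2_norm_eq_inner
      by (simp add: inner_diff_left inner_diff_right inner_add_left inner_add_right
          inner_commute algebra_simps)
    moreover have "2 * t * \<epsilon> \<le> 2 * t * inner (u j - p) z" using \<epsilon>(2)[of j] t by simp
    moreover have "t * (t * (norm z)\<^sup>2) = t * \<epsilon>" using t(2) by simp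
    ultimately show ?thesis by linarith
  qed
  then have "asymptotic_radius_sq u (p + t *\<^sub>R z) \<le> asymptotic_radius_sq u p - t * \<epsilon>"
    using asymptotic_radius_sq_le[where u = u and M = M, OF bounded tendsto_const, where s = 1 and t = 0 and y = "p + t *\<^sub>R z"
        and a = p and d = "- t * \<epsilon>"]
    by simp
  then have "asymptotic_radius_sq u (p + t *\<^sub>R z) < asymptotic_radius_sq u p"
    using mult_pos_pos[OF t(1) \<epsilon>(1)] by linarith
  then show ?thesis unfolding t_def .
qed

section \<open>Weak convergence of nonexpansive iterations\<close>

lemma metric_proj_Fejer_convergent:
  fixes G :: "'a::{real_inner,complete_space} set"
  assumes G: "G \<noteq> {}" "closed G" "convex G"
    and Fejer: "\<And>q k m. q \<in> G \<Longrightarrow> k \<le> m \<Longrightarrow> norm (x m - q) \<le> norm (x k - q)"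
  shows "\<exists>p\<in>G. (\<lambda>k. metric_proj G (x k)) \<longlonglongrightarrow> p"
proof -
  define P where "P k = metric_proj G (x k)" for k
  define d where "d k = norm (x k - P k)" for k
  have P: "P k \<in> G" for k unfolding P_def by (rule metric_proj_in[OF G])
  have d_mono: "d m \<le> d k" if "k \<le> m" for k m
    using metric_proj_le[OF G P[of k], of "x m"] Fejer[OF P[of k] that] unfolding d_def P_def by simp
  have P_dist: "(norm (P m - P k))\<^sup>2 \<le> (d k)\<^sup>2 - (d m)\<^sup>2" if "k \<le> m" for k m
  proof -
    have "inner (x m - P m) (P k - P m) \<le> 0"
      unfolding P_def by (rule metric_proj_inner_le[OF G]) (use P[of k] P_def in simp)
    moreover have "(norm (x m - P k))\<^sup>2
        = (d m)\<^sup>2 + (norm (P m - P k))\<^sup>2 - 2 * inner (x m - P m) (P k - P m)"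
      unfolding d_def power2_norm_eq_inner
      by (simp add: inner_diff_left inner_diff_right inner_commute algebra_simps)
    moreover have "(norm (x m - P k))\<^sup>2 \<le> (d k)\<^sup>2"
      using Fejer[OF P that] unfolding d_def by (intro power_mono) auto
    ultimately show ?thesis by linarith
  qed
  have "decseq (\<lambda>k. (d k)\<^sup>2)"
    unfolding decseq_def using d_mono by (simp add: d_def power_mono)
  then obtain L where L: "(\<lambda>k. (d k)\<^sup>2) \<longlonglongrightarrow> L" "\<And>k. L \<le> (d k)\<^sup>2"
    using decseq_convergent[of "\<lambda>k. (d k)\<^sup>2" 0] by auto
  have "(norm (P m - P k))\<^sup>2 \<le> ((d m)\<^sup>2 - L) + ((d k)\<^sup>2 - L)" for m k
    using P_dist[of k m] P_dist[of m k] L(2)[of m] L(2)[of k]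
    by (cases "k \<le> m") (auto simp: norm_minus_commute)
  moreover have "(\<lambda>k. (d k)\<^sup>2 - L) \<longlonglongrightarrow> 0" using LIM_zero[OF L(1)] .
  ultimately have "Cauchy P" by (rule Cauchy_if_power2_dist_bounded)
  then obtain p where P_lim: "P \<longlonglongrightarrow> p" using Cauchy_convergent_iff convergent_def by blast
  moreover have "p \<in> G" using closed_sequentially[OF G(2) P P_lim] .
  ultimately show ?thesis unfolding P_def by blast
qed

lemma inner_le_of_metric_proj_tendsto:
  fixes G :: "'a::{real_inner,complete_space} set"
  assumes G: "G \<noteq> {}" "closed G" "convex G"
    and Fejer: "\<And>q k m. q \<in> G \<Longrightarrow> k \<le> m \<Longrightarrow> norm (x m - q) \<le> norm (x k - q)"
    and p: "(\<lambda>k. metric_proj G (x k)) \<longlonglongrightarrow> p" and c: "c \<in> G"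
  shows "\<exists>e. e \<longlonglongrightarrow> 0 \<and> (\<forall>k. inner (x k - p) (c - p) \<le> e k)"
proof (intro exI conjI allI)
  define P where "P k = metric_proj G (x k)" for k
  have P: "P k \<in> G" for k unfolding P_def by (rule metric_proj_in[OF G])
  define R where "R = norm (x 0 - P 0) + norm (c - p)"
  have "(\<lambda>k. norm (P k - p)) \<longlonglongrightarrow> 0"
    using p unfolding P_def by (simp add: LIM_zero tendsto_norm_zero)
  then show "(\<lambda>k. R * norm (P k - p)) \<longlonglongrightarrow> 0" by (rule tendsto_mult_right_zero)
  fix k
  have "inner (x k - P k) (c - P k) \<le> 0"
    unfolding P_def by (rule metric_proj_inner_le[OF G c])
  moreover have "norm (x k - P k) \<le> norm (x 0 - P 0)"
    using metric_proj_le[OF G P[of 0], of "x k"] Fejer[OF P[of 0], of 0 k] unfolding P_def by simp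
  then have "inner (x k - P k) (P k - p) \<le> norm (x 0 - P 0) * norm (P k - p)"
    by (intro order_trans[OF norm_cauchy_schwarz] mult_right_mono) auto
  moreover have "inner (P k - p) (c - p) \<le> norm (P k - p) * norm (c - p)"
    by (rule norm_cauchy_schwarz)
  moreover have "inner (x k - p) (c - p)
      = inner (x k - P k) (c - P k) + inner (x k - P k) (P k - p) + inner (P k - p) (c - p)"
    by (simp add: inner_diff_left inner_diff_right inner_commute algebra_simps)
  ultimately show "inner (x k - p) (c - p) \<le> R * norm (P k - p)"
    unfolding R_def by (simp add: algebra_simps)
qed

lemma weakly_convergesI_subseq:
  fixes x :: "nat \<Rightarrow> 'a::real_inner"
  assumes no_subseq: "\<And>z \<epsilon> (\<sigma> :: nat \<Rightarrow> nat). 0 < \<epsilon> \<Longrightarrow> strict_mono \<sigma> \<Longrightarrow> \<not> (\<forall>j. \<epsilon> \<le> inner (x (\<sigma> j) - p) z)"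
  shows "weakly_converges x p"
proof -
  have ev: "eventually (\<lambda>k. inner (x k - p) z < \<epsilon>) sequentially" if "0 < \<epsilon>" for z \<epsilon>
  proof (rule ccontr)
    assume "\<not> eventually (\<lambda>k. inner (x k - p) z < \<epsilon>) sequentially"
    then have inf: "infinite {k. \<epsilon> \<le> inner (x k - p) z}"
      by (simp add: not_eventually frequently_cofinite[symmetric] cofinite_eq_sequentially not_less)
    have "\<forall>j. \<epsilon> \<le> inner (x (enumerate {k. \<epsilon> \<le> inner (x k - p) z} j) - p) z"
      using enumerate_in_set[OF inf] by simp
    then show False
      using no_subseq[where \<sigma> = "enumerate {k. \<epsilon> \<le> inner (x k - p) z}"] that
        strict_mono_enumerate[OF inf] by blast
  qed
  show ?thesis unfolding weakly_converges_def
  proof (intro allI tendstoI)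
    fix z and \<epsilon> :: real assume "0 < \<epsilon>"
    from ev[OF this, of z] ev[OF this, of "- z"]
    show "eventually (\<lambda>k. dist (inner (x k) z) (inner p z) < \<epsilon>) sequentially"
      by eventually_elim (simp add: dist_real_def inner_diff_left abs_less_iff)
  qed
qed

lemma weakly_converges_asymptotically_regular:
  fixes T :: "'a::{real_inner,complete_space} \<Rightarrow> 'a"
  assumes nonexp: "\<And>a b. norm (T a - T b) \<le> norm (a - b)"
    and bounded: "\<And>k. norm (x k) \<le> M"
    and regular: "(\<lambda>k. norm (x k - T (x k))) \<longlonglongrightarrow> 0"
    and inner_le: "\<And>c. T c = c \<Longrightarrow> \<exists>e. e \<longlonglongrightarrow> 0 \<and> (\<forall>k. inner (x k - p) (c - p) \<le> e k)"
  shows "weakly_converges x p"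
proof (rule weakly_convergesI_subseq, rule notI)
  fix z \<epsilon> and \<sigma> :: "nat \<Rightarrow> nat"
  assume \<epsilon>: "0 < \<epsilon>" and \<sigma>: "strict_mono \<sigma>" and away: "\<forall>j. \<epsilon> \<le> inner (x (\<sigma> j) - p) z"
  define u where "u = x \<circ> \<sigma>"
  let ?r = "asymptotic_radius_sq u"
  have bounded_u: "norm (u j) \<le> M" for j unfolding u_def using bounded by simp
  obtain c where c: "\<And>y. ?r c \<le> ?r y"
    using asymptotic_radius_sq_has_minimum[where u = u and M = M, OF bounded_u] by blast
  have "(\<lambda>j. norm (u j - T (u j))) \<longlonglongrightarrow> 0"
    using LIMSEQ_subseq_LIMSEQ[OF regular \<sigma>] unfolding u_def by (simp add: o_def)
  then have "T c = c"
    by (rule asymptotic_center_fixed_point[where u = u and M = M, OF bounded_u nonexp _ c])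
  then obtain e where e: "e \<longlonglongrightarrow> 0" "\<And>k. inner (x k - p) (c - p) \<le> e k"
    using inner_le by blast
  have "inner (u j - p) (c - p) \<le> (e \<circ> \<sigma>) j" for j unfolding u_def using e(2) by simp
  then have "?r p + (norm (p - c))\<^sup>2 \<le> ?r c"
    by (rule asymptotic_radius_sq_add_le[where u = u and M = M,
          OF bounded_u LIMSEQ_subseq_LIMSEQ[OF e(1) \<sigma>]])
  moreover have "\<epsilon> \<le> inner (u j - p) z" for j unfolding u_def using away by simp
  then have "?r (p + (\<epsilon> / (norm z)\<^sup>2) *\<^sub>R z) < ?r p"
    by (rule asymptotic_radius_sq_descent[where u = u and M = M, OF bounded_u \<epsilon>])
  ultimately show False
    using c[of "p + (\<epsilon> / (norm z)\<^sup>2) *\<^sub>R z"] zero_le_power2[of "norm (p - c)"] by linarith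
qed

lemma nonexpansive_iterates_weakly_converge:
  fixes T :: "'a::{real_inner,complete_space} \<Rightarrow> 'a"
  assumes nonexp: "\<And>a b. norm (T a - T b) \<le> norm (a - b)"
    and fixed: "{v. T v = v} \<noteq> {}"
    and x: "\<And>k. x (Suc k) = T (x k)"
    and regular: "(\<lambda>k. norm (x k - T (x k))) \<longlonglongrightarrow> 0"
  shows "\<exists>p. T p = p \<and> weakly_converges x p \<and> (\<lambda>k. metric_proj {v. T v = v} (x k)) \<longlonglongrightarrow> p"
proof -
  define G where "G = {v. T v = v}"
  have "closed G" unfolding G_def by (rule closed_fixed_points_nonexpansive) (rule nonexp)
  moreover have "convex G" unfolding G_def by (rule convex_fixed_points_nonexpansive) (rule nonexp)
  moreover have "G \<noteq> {}" using fixed unfolding G_def .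
  ultimately have G: "G \<noteq> {}" "closed G" "convex G" by blast+
  have Fejer: "norm (x m - q) \<le> norm (x k - q)" if "q \<in> G" "k \<le> m" for q k m
    using \<open>k \<le> m\<close>
  proof (induction m rule: dec_induct)
    case (step m)
    have "norm (x (Suc m) - q) = norm (T (x m) - T q)" using \<open>q \<in> G\<close> unfolding G_def x by simp
    also have "\<dots> \<le> norm (x m - q)" by (rule nonexp)
    also have "\<dots> \<le> norm (x k - q)" by (rule step.IH)
    finally show ?case .
  qed simp
  obtain q where q: "q \<in> G" using G(1) by blast
  have bounded: "norm (x k) \<le> norm q + norm (x 0 - q)" for k
    using Fejer[OF q, of 0 k] norm_triangle_ineq2[of "x k" q] by linarith
  obtain p where p: "p \<in> G" "(\<lambda>k. metric_proj G (x k)) \<longlonglongrightarrow> p"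
    using metric_proj_Fejer_convergent[where x = x, OF G Fejer] by blast
  have "weakly_converges x p"
  proof (rule weakly_converges_asymptotically_regular[where x = x and M = "norm q + norm (x 0 - q)",
        OF nonexp bounded regular])
    show "\<exists>e. e \<longlonglongrightarrow> 0 \<and> (\<forall>k. inner (x k - p) (c - p) \<le> e k)" if "T c = c" for c
      using inner_le_of_metric_proj_tendsto[where x = x, OF G Fejer p(2)] that unfolding G_def
      by blast
  qed
  then show ?thesis using p unfolding G_def by (intro exI[of _ p]) simp
qed

theorem theorem3p5:
  fixes C Q :: "'a::{real_inner, complete_space} set"
    and f g :: "'a \<Rightarrow> 'a"
    and \<alpha>1 \<alpha>2 lam :: real
    and x0 :: 'a
    and x y :: "nat \<Rightarrow> 'a"
  assumes C: "C \<noteq> {}" "closed C" "convex C"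
    and Q: "Q \<noteq> {}" "closed Q" "convex Q"
    and f: "\<alpha>1 > 0" "inverse_strongly_monotone \<alpha>1 f"
    and g: "\<alpha>2 > 0" "inverse_strongly_monotone \<alpha>2 g"
    and lam: "0 < lam" "lam < 2 * min \<alpha>1 \<alpha>2"
    and Gamma: "SOL C f \<inter> SOL Q g \<noteq> {}"
    and x0: "x 0 = x0"
    and y_def: "\<And>k. y k = metric_proj Q (x k - lam *\<^sub>R g (x k))"
    and x_step: "\<And>k. x (Suc k) = metric_proj C (y k - lam *\<^sub>R f (y k))"
  shows "\<exists>xs \<in> SOL C f \<inter> SOL Q g.
           weakly_converges x xs \<and>
           (\<lambda>k. metric_proj (SOL C f \<inter> SOL Q g) (x k)) \<longlonglongrightarrow> xs"
proof -
  define A where "A v = metric_proj C (v - lam *\<^sub>R f v)" for v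
  define B where "B v = metric_proj Q (v - lam *\<^sub>R g v)" for v
  have lam_f: "lam < 2 * \<alpha>1" and lam_g: "lam < 2 * \<alpha>2" using lam(2) by auto
  obtain \<kappa>\<^sub>A \<kappa>\<^sub>B where A: "strongly_quasi_nonexpansive \<kappa>\<^sub>A A (SOL C f)"
    and B: "strongly_quasi_nonexpansive \<kappa>\<^sub>B B (SOL Q g)"
    using projected_step_strongly_quasi_nonexpansive[OF C f(2) lam(1) lam_f]
      projected_step_strongly_quasi_nonexpansive[OF Q g(2) lam(1) lam_g]
    unfolding A_def[abs_def] B_def[abs_def] by blast
  have fixed: "{v. A (B v) = v} = SOL C f \<inter> SOL Q g"
    using strongly_quasi_nonexpansive_comp_fixed_points[OF A B _ _ Gamma]
      projected_step_fixed_iff_SOL[OF C lam(1)] projected_step_fixed_iff_SOL[OF Q lam(1)]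
    unfolding A_def B_def by blast
  have "norm (A a - A b) \<le> norm (a - b)" for a b
    unfolding A_def using lam(1) lam_f by (intro projected_step_nonexpansive[OF C f(2)]) auto
  moreover have "norm (B a - B b) \<le> norm (a - b)" for a b
    unfolding B_def using lam(1) lam_g by (intro projected_step_nonexpansive[OF Q g(2)]) auto
  ultimately have nonexp: "norm (A (B a) - A (B b)) \<le> norm (a - b)" for a b by (meson order_trans)
  have iterate: "x (Suc k) = A (B (x k))" for k unfolding x_step y_def A_def B_def ..
  obtain q where q: "q \<in> SOL C f \<inter> SOL Q g" using Gamma by blast
  have "(\<lambda>k. norm (x k - A (B (x k)))) \<longlonglongrightarrow> 0"
    using strongly_quasi_nonexpansive_asymptotically_regular[OF
        strongly_quasi_nonexpansive_comp[OF A B] q, of x] iterate by simp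
  then obtain p where "p \<in> {v. A (B v) = v}" "weakly_converges x p"
      "(\<lambda>k. metric_proj {v. A (B v) = v} (x k)) \<longlonglongrightarrow> p"
    using nonexpansive_iterates_weakly_converge[where T = "\<lambda>v. A (B v)" and x = x] nonexp iterate
      fixed q by blast
  then show ?thesis unfolding fixed by blast
qed

end
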